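(* Let $\rho$ be a single-qubit state with spectral decomposition $\rho=\lambda_0|\psi_0\rangle\langle\psi_0|+\lambda_1|\psi_1\rangle\langle\psi_1|$, $\lambda_0\neq\lambda_1$, and let $U(\bm\varphi)$ be any smooth family of $2\times2$ unitaries depending on two real parameters $\bm\varphi=(\varphi_1,\varphi_2)$. Let $\rho_{\bm\varphi}=U(\bm\varphi)\rho U(\bm\varphi)^\dagger$ and $|\psi_0(\bm\varphi)\rangle=U(\bm\varphi)|\psi_0\rangle$. Then the Uhlmann matrices satisfy $$D_{ij}(\rho_{\bm\varphi})=\pm\big(2\,\mathrm{Tr}(\rho^2)-1\big)^{3/2}\,D_{ij}\big(|\psi_0(\bm\varphi)\rangle\langle\psi_0(\bm\varphi)|\big)=\pm 4\big(2\,\mathrm{Tr}(\rho^2)-1\big)^{3/2}\,\mathrm{Im}\,\langle\psi_0|\mathcal{H}_i\mathcal{H}_j|\psi_0\rangle,$$ with the sign $+$ if $\lambda_0>\lambda_1$ and $-$ if $\lambda_0<\lambda_1$.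
   Context: Effective Hamiltonians: $\mathcal{H}_j:=i\,(\partial_{\varphi_j}U^\dagger(\bm\varphi))U(\bm\varphi)$. For a family of states $\rho_{\bm\varphi}$, the symmetric logarithmic derivatives $L_{\varphi_j}$ are Hermitian operators with $\partial_{\varphi_j}\rho_{\bm\varphi}=\tfrac12(L_{\varphi_j}\rho_{\bm\varphi}+\rho_{\bm\varphi}L_{\varphi_j})$, and the Uhlmann matrix is $D_{ij}(\rho_{\bm\varphi})=\mathrm{Im}\,\mathrm{Tr}(\rho_{\bm\varphi}L_{\varphi_i}L_{\varphi_j})=\frac{1}{2i}\mathrm{Tr}(\rho_{\bm\varphi}[L_{\varphi_i},L_{\varphi_j}])$ (independent of the non-unique part of $L$ outside the support). *)

theory Defs
  imports "HOL-Analysis.Analysis"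
begin

type_synonym qvec = "complex ^ 2"
type_synonym qmat = "complex ^ 2 ^ 2"

definition adj :: "qmat \<Rightarrow> qmat" where
  "adj A = (\<chi> i j. cnj (A $ j $ i))"

definition mtrace :: "qmat \<Rightarrow> complex" where
  "mtrace A = (\<Sum>i\<in>UNIV. A $ i $ i)"

definition cinner :: "qvec \<Rightarrow> qvec \<Rightarrow> complex" where
  "cinner x y = (\<Sum>i\<in>UNIV. cnj (x $ i) * y $ i)"

definition ketbra :: "qvec \<Rightarrow> qvec \<Rightarrow> qmat" where
  "ketbra x y = (\<chi> a b. x $ a * cnj (y $ b))"

definition hermitian :: "qmat \<Rightarrow> bool" where
  "hermitian A \<longleftrightarrow> adj A = A"

definition unitary :: "qmat \<Rightarrow> bool" where
  "unitary A \<longleftrightarrow> adj A ** A = mat 1 \<and> A ** adj A = mat 1"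

definition density_matrix :: "qmat \<Rightarrow> bool" where
  "density_matrix \<rho> \<longleftrightarrow> hermitian \<rho> \<and> (\<forall>v. 0 \<le> Re (cinner v (\<rho> *v v))) \<and> mtrace \<rho> = 1"

definition partial :: "2 \<Rightarrow> (real ^ 2 \<Rightarrow> 'b::real_normed_vector) \<Rightarrow> real ^ 2 \<Rightarrow> 'b" where
  "partial j f x = vector_derivative (\<lambda>t. f (x + t *\<^sub>R axis j 1)) (at 0)"

fun Ck :: "nat \<Rightarrow> (real ^ 2 \<Rightarrow> 'b::real_normed_vector) \<Rightarrow> bool" where
  "Ck 0 f = continuous_on UNIV f"
| "Ck (Suc k) f = ((\<forall>x. f differentiable (at x)) \<and> continuous_on UNIV f
                   \<and> (\<forall>j. Ck k (partial j f)))"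

definition smooth :: "(real ^ 2 \<Rightarrow> 'b::real_normed_vector) \<Rightarrow> bool" where
  "smooth f \<longleftrightarrow> (\<forall>k. Ck k f)"

definition is_SLD :: "(real ^ 2 \<Rightarrow> qmat) \<Rightarrow> real ^ 2 \<Rightarrow> 2 \<Rightarrow> qmat \<Rightarrow> bool" where
  "is_SLD fam x j L \<longleftrightarrow> hermitian L \<and>
     partial j fam x = (1/2::real) *\<^sub>R (L ** fam x + fam x ** L)"

definition SLD :: "(real ^ 2 \<Rightarrow> qmat) \<Rightarrow> real ^ 2 \<Rightarrow> 2 \<Rightarrow> qmat" where
  "SLD fam x j = (SOME L. is_SLD fam x j L)"

definition uhlmann :: "(real ^ 2 \<Rightarrow> qmat) \<Rightarrow> real ^ 2 \<Rightarrow> 2 \<Rightarrow> 2 \<Rightarrow> real" where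
  "uhlmann fam x i j = Im (mtrace (fam x ** SLD fam x i ** SLD fam x j))"

definition eff_ham :: "(real ^ 2 \<Rightarrow> qmat) \<Rightarrow> real ^ 2 \<Rightarrow> 2 \<Rightarrow> qmat" where
  "eff_ham U x j = (let M = partial j (\<lambda>y. adj (U y)) x ** U x in (\<chi> a b. \<i> * M $ a $ b))"

end

theory Submission
  imports Defs
begin

text \<open>Let \<open>W\<close> be the unitary with columns \<open>\<psi>\<^sub>0, \<psi>\<^sub>1\<close> and \<open>T = U(\<phi>) W\<close>.
  In the moving frame \<open>T\<close> the state \<open>\<rho>\<^sub>\<phi>\<close> is the fixed matrix
  \<open>D = diag(\<lambda>\<^sub>0, \<lambda>\<^sub>1)\<close> and its derivatives are \<open>M\<^sub>k D + D M\<^sub>k\<^sup>\<dagger>\<close>, where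
  \<open>M\<^sub>k = T\<^sup>\<dagger> \<partial>\<^sub>k U W\<close> is anti-Hermitian. The SLD equation in this frame determines
  the off-diagonal entry of the SLD as \<open>-2(\<lambda>\<^sub>0 - \<lambda>\<^sub>1) (M\<^sub>k)\<^sub>1\<^sub>2\<close>, and its real
  diagonal entries do not contribute to \<open>Im Tr(D L\<^sub>i L\<^sub>j)\<close>; hence the Uhlmann
  matrix is \<open>4 (\<lambda>\<^sub>0 - \<lambda>\<^sub>1)\<^sup>3 Im((M\<^sub>i)\<^sub>1\<^sub>2 conj (M\<^sub>j)\<^sub>1\<^sub>2)\<close>.
  The pure state \<open>|\<psi>\<^sub>0(\<phi>)\<rangle>\<langle>\<psi>\<^sub>0(\<phi>)|\<close> is the case \<open>\<lambda>\<^sub>0 = 1, \<lambda>\<^sub>1 = 0\<close>,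
  and \<open>2 Tr \<rho>\<^sup>2 - 1 = (\<lambda>\<^sub>0 - \<lambda>\<^sub>1)\<^sup>2\<close> because \<open>\<lambda>\<^sub>0 + \<lambda>\<^sub>1 = 1\<close>.
  Finally \<open>W\<^sup>\<dagger> \<H>\<^sub>k W = -i M\<^sub>k\<close>, which turns the pure-state value into
  \<open>4 Im \<langle>\<psi>\<^sub>0|\<H>\<^sub>i \<H>\<^sub>j|\<psi>\<^sub>0\<rangle>\<close>.\<close>

definition diag2 :: "real \<Rightarrow> real \<Rightarrow> qmat" where
  "diag2 a b =
     (\<chi> i j. if i = j then (if i = 1 then complex_of_real a else complex_of_real b) else 0)"

definition basis_mat :: "qvec \<Rightarrow> qvec \<Rightarrow> qmat" where
  "basis_mat p q = (\<chi> a b. if b = 1 then p $ a else q $ a)"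

definition frame_gen :: "(real ^ 2 \<Rightarrow> qmat) \<Rightarrow> qmat \<Rightarrow> real ^ 2 \<Rightarrow> 2 \<Rightarrow> qmat" where
  "frame_gen U W x k = adj (U x ** W) ** partial k U x ** W"

lemma scaleR_qmat_component [simp]:
  "((r::real) *\<^sub>R (A::qmat)) $ i $ j = complex_of_real r * A $ i $ j"
  by (simp only: vector_scaleR_component) (simp add: scaleR_conv_of_real)

lemma adj_matrix_mult: "adj (A ** B) = adj B ** adj A"
  by (simp add: vec_eq_iff adj_def matrix_matrix_mult_def sum_2 mult.commute)

lemma adj_adj [simp]: "adj (adj A) = A"
  by (simp add: vec_eq_iff adj_def)

lemma adj_add: "adj (A + B) = adj A + adj B"
  by (simp add: vec_eq_iff adj_def)

lemma adj_scaleR: "adj (r *\<^sub>R A) = r *\<^sub>R adj A"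
  by (simp add: vec_eq_iff adj_def)

lemma adj_uminus: "adj (- A) = - adj A"
  by (simp add: vec_eq_iff adj_def)

lemma hermitian_entries:
  assumes "hermitian A"
  shows "A $ 2 $ 1 = cnj (A $ 1 $ 2)" "Im (A $ 1 $ 1) = 0" "Im (A $ 2 $ 2) = 0"
proof -
  have "\<And>a b. cnj (A $ b $ a) = A $ a $ b"
    using assms unfolding hermitian_def vec_eq_iff adj_def by simp
  from this[of 1 2] this[of 1 1] this[of 2 2] show
    "A $ 2 $ 1 = cnj (A $ 1 $ 2)" "Im (A $ 1 $ 1) = 0" "Im (A $ 2 $ 2) = 0"
    by (auto simp: complex_eq_iff)
qed

lemma antihermitian_entries:
  assumes "adj M = - M"
  shows "M $ 2 $ 1 = - cnj (M $ 1 $ 2)" "Re (M $ 1 $ 1) = 0" "Re (M $ 2 $ 2) = 0"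
proof -
  have "\<And>a b. cnj (M $ b $ a) = - M $ a $ b"
    using assms unfolding vec_eq_iff adj_def by simp
  from this[of 1 2] this[of 1 1] this[of 2 2] show
    "M $ 2 $ 1 = - cnj (M $ 1 $ 2)" "Re (M $ 1 $ 1) = 0" "Re (M $ 2 $ 2) = 0"
    by (auto simp: complex_eq_iff)
qed

lemma mtrace_matrix_mult_commute: "mtrace (A ** B) = mtrace (B ** A)"
  by (simp add: mtrace_def matrix_matrix_mult_def sum_2 mult.commute)

lemma mtrace_diag2: "mtrace (diag2 a b) = complex_of_real (a + b)"
  by (simp add: mtrace_def diag2_def sum_2)

lemma diag2_mult_diag2: "diag2 a b ** diag2 c d = diag2 (a * c) (b * d)"
  unfolding vec_eq_iff forall_2 by (simp add: diag2_def matrix_matrix_mult_def sum_2)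

lemma bounded_bilinear_qmat_mult: "bounded_bilinear ((**) :: qmat \<Rightarrow> qmat \<Rightarrow> qmat)"
  unfolding bilinear_conv_bounded_bilinear[symmetric] bilinear_def
  by (auto intro!: linearI simp: vec_eq_iff matrix_matrix_mult_def sum_2 algebra_simps)

lemma bounded_linear_adj: "bounded_linear adj"
  unfolding linear_conv_bounded_linear[symmetric]
  by (auto intro!: linearI simp: vec_eq_iff adj_def)

lemmas qmat_linear_simps = matrix_add_ldistrib
  bounded_bilinear.add_left[OF bounded_bilinear_qmat_mult]
  bounded_bilinear.scaleR_left[OF bounded_bilinear_qmat_mult]
  bounded_bilinear.scaleR_right[OF bounded_bilinear_qmat_mult]
  bounded_bilinear.minus_left[OF bounded_bilinear_qmat_mult]
  bounded_bilinear.minus_right[OF bounded_bilinear_qmat_mult]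
  adj_matrix_mult adj_add adj_scaleR adj_uminus

lemma unitary_cancel:
  assumes "unitary T"
  shows "adj T ** T = mat 1" "T ** adj T = mat 1"
    "A ** adj T ** T = A" "A ** T ** adj T = A"
  using assms unfolding unitary_def by (simp_all add: matrix_mul_assoc[symmetric])

lemma unitary_matrix_mult:
  assumes "unitary A" "unitary B"
  shows "unitary (A ** B)"
  by (simp add: unitary_def adj_matrix_mult matrix_mul_assoc
      unitary_cancel[OF assms(1)] unitary_cancel[OF assms(2)])

lemma hermitian_sandwich: "hermitian L \<Longrightarrow> hermitian (adj T ** L ** T)"
  by (simp add: hermitian_def adj_matrix_mult matrix_mul_assoc)

lemma unitary_sandwich_cancel:
  assumes "unitary T"
  shows "T ** (adj T ** A ** T) ** adj T = A" "adj T ** (T ** A ** adj T) ** T = A"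
  using unitary_cancel[OF assms] by (simp_all add: matrix_mul_assoc)

lemma hermitian_unitary_sandwich_iff:
  assumes "unitary T"
  shows "hermitian (adj T ** L ** T) \<longleftrightarrow> hermitian L"
proof
  assume "hermitian (adj T ** L ** T)"
  then have "hermitian (adj (adj T) ** (adj T ** L ** T) ** adj T)" by (rule hermitian_sandwich)
  then show "hermitian L" by (simp add: unitary_sandwich_cancel[OF assms])
qed (rule hermitian_sandwich)

lemma mtrace_unitary_sandwich:
  assumes "unitary T"
  shows "mtrace (T ** A ** adj T) = mtrace A"
proof -
  have "mtrace (T ** A ** adj T) = mtrace (adj T ** (T ** A))" by (rule mtrace_matrix_mult_commute)
  then show ?thesis by (simp add: matrix_mul_assoc unitary_cancel[OF assms])
qed

lemma unitary_sandwich_eq_iff: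
  assumes "unitary T"
  shows "T ** A ** adj T = T ** B ** adj T \<longleftrightarrow> A = B"
  by (metis unitary_sandwich_cancel(2)[OF assms])

lemma is_SLD_unitary_sandwich_iff:
  assumes T: "unitary T" and fam: "fam x = T ** D ** adj T"
    and dfam: "partial k fam x = T ** E ** adj T"
  shows "is_SLD fam x k L \<longleftrightarrow> hermitian (adj T ** L ** T)
           \<and> E = (1/2::real) *\<^sub>R ((adj T ** L ** T) ** D + D ** (adj T ** L ** T))"
proof -
  define L' where "L' = adj T ** L ** T"
  have L: "L = T ** L' ** adj T"
    unfolding L'_def by (simp add: unitary_sandwich_cancel[OF T])
  have "(1/2::real) *\<^sub>R (L ** fam x + fam x ** L)
      = T ** ((1/2::real) *\<^sub>R (L' ** D + D ** L')) ** adj T"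
    unfolding L fam by (simp add: qmat_linear_simps matrix_mul_assoc unitary_cancel[OF T])
  then show ?thesis
    unfolding is_SLD_def dfam L'_def[symmetric] hermitian_unitary_sandwich_iff[OF T, of L, folded L'_def]
    by (simp add: unitary_sandwich_eq_iff[OF T])
qed

lemma sld_diag2_offdiag:
  fixes l0 l1 :: real
  assumes l: "l0 + l1 = 1" and M: "adj M = - M" and L: "hermitian L"
    and sld: "M ** diag2 l0 l1 + diag2 l0 l1 ** adj M
      = (1/2::real) *\<^sub>R (L ** diag2 l0 l1 + diag2 l0 l1 ** L)"
  shows "L $ 1 $ 2 = - 2 * (l0 - l1) * M $ 1 $ 2"
proof -
  have "(M ** diag2 l0 l1 + diag2 l0 l1 ** adj M) $ 1 $ 2
      = ((1/2::real) *\<^sub>R (L ** diag2 l0 l1 + diag2 l0 l1 ** L)) $ 1 $ 2"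
    using sld by simp
  then have "M $ 1 $ 2 * l1 - l0 * M $ 1 $ 2 = (L $ 1 $ 2 * l1 + l0 * L $ 1 $ 2) / 2"
    using antihermitian_entries(1)[OF M]
    by (simp add: matrix_matrix_mult_def sum_2 diag2_def adj_def del: vector_scaleR_component)
  also have "\<dots> = L $ 1 $ 2 * complex_of_real (l0 + l1) / 2"
    by (simp add: algebra_simps)
  also have "\<dots> = L $ 1 $ 2 / 2"
    using l by simp
  finally show ?thesis by (simp add: algebra_simps)
qed

lemma sld_diag2_exists:
  fixes l0 l1 :: real
  assumes l: "l0 + l1 = 1" and M: "adj M = - M"
  shows "\<exists>L. hermitian L \<and>
    M ** diag2 l0 l1 + diag2 l0 l1 ** adj M
      = (1/2::real) *\<^sub>R (L ** diag2 l0 l1 + diag2 l0 l1 ** L)"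
proof -
  note m = antihermitian_entries[OF M]
  have m': "cnj (M $ 1 $ 1) = - M $ 1 $ 1" "cnj (M $ 2 $ 2) = - M $ 2 $ 2"
    using m(2,3) by (simp_all add: complex_eq_iff)
  define c where "c = complex_of_real (- 2 * (l0 - l1)) * M $ 1 $ 2"
  define L :: qmat where "L = (\<chi> a b. if a = b then 0 else if a = 1 then c else cnj c)"
  have l1: "l1 = 1 - l0" using l by simp
  have "hermitian L"
    unfolding hermitian_def L_def adj_def vec_eq_iff forall_2 by simp
  moreover have "M ** diag2 l0 l1 + diag2 l0 l1 ** adj M
      = (1/2::real) *\<^sub>R (L ** diag2 l0 l1 + diag2 l0 l1 ** L)"
    unfolding vec_eq_iff forall_2
    by (simp add: L_def c_def l1 matrix_matrix_mult_def sum_2 diag2_def adj_def m m' algebra_simps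
        del: vector_scaleR_component)
  ultimately show ?thesis by blast
qed

lemma im_mtrace_diag2_hermitian:
  assumes "hermitian A" "hermitian B"
  shows "Im (mtrace (diag2 l0 l1 ** A ** B)) = (l0 - l1) * Im (A $ 1 $ 2 * cnj (B $ 1 $ 2))"
  using hermitian_entries[OF assms(1)] hermitian_entries[OF assms(2)]
  by (simp add: mtrace_def matrix_matrix_mult_def sum_2 diag2_def algebra_simps)

lemma uhlmann_unitary_sandwich_diag2:
  fixes l0 l1 :: real
  assumes l: "l0 + l1 = 1" and T: "unitary T"
    and fam: "fam x = T ** diag2 l0 l1 ** adj T"
    and dfam: "\<And>k. partial k fam x = T ** (M k ** diag2 l0 l1 + diag2 l0 l1 ** adj (M k)) ** adj T"
    and M: "\<And>k. adj (M k) = - M k"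
  shows "uhlmann fam x i j = 4 * (l0 - l1) ^ 3 * Im (M i $ 1 $ 2 * cnj (M j $ 1 $ 2))"
proof -
  let ?D = "diag2 l0 l1"
  define L where "L k = adj T ** SLD fam x k ** T" for k
  have "is_SLD fam x k (SLD fam x k)" for k
  proof -
    obtain L' where
      "hermitian L'" "M k ** ?D + ?D ** adj (M k) = (1/2::real) *\<^sub>R (L' ** ?D + ?D ** L')"
      using sld_diag2_exists[OF l M] by blast
    then have "is_SLD fam x k (T ** L' ** adj T)"
      by (simp add: is_SLD_unitary_sandwich_iff[OF T fam dfam] unitary_sandwich_cancel[OF T])
    then show ?thesis unfolding SLD_def by (rule someI)
  qed
  then have "hermitian (L k)" "L k $ 1 $ 2 = - 2 * (l0 - l1) * M k $ 1 $ 2" for k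
    using sld_diag2_offdiag[OF l M] by (simp_all add: is_SLD_unitary_sandwich_iff[OF T fam dfam] L_def)
  moreover have "fam x ** SLD fam x i ** SLD fam x j = T ** (?D ** L i ** L j) ** adj T"
    unfolding fam L_def by (simp add: matrix_mul_assoc unitary_cancel[OF T])
  ultimately have "uhlmann fam x i j
      = (l0 - l1) * Im ((- 2 * (l0 - l1) * M i $ 1 $ 2) * cnj (- 2 * (l0 - l1) * M j $ 1 $ 2))"
    unfolding uhlmann_def by (simp add: mtrace_unitary_sandwich[OF T] im_mtrace_diag2_hermitian)
  then show ?thesis by (simp add: power3_eq_cube algebra_simps)
qed

lemma im_neg_mult_antihermitian:
  assumes "adj A = - A" "adj B = - B"
  shows "Im (- (A ** B) $ 1 $ 1) = Im (A $ 1 $ 2 * cnj (B $ 1 $ 2))"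
  using antihermitian_entries[OF assms(1)] antihermitian_entries[OF assms(2)]
  by (simp add: matrix_matrix_mult_def sum_2)

lemma sign_mult_powr_three_halves: "(if d > 0 then 1 else -1) * (d\<^sup>2) powr (3/2) = (d::real) ^ 3"
proof -
  have "(d\<^sup>2) powr (3/2) = (\<bar>d\<bar> powr 2) powr (3/2)"
    by simp
  also have "\<dots> = \<bar>d\<bar> ^ 3"
    unfolding powr_powr by simp
  finally show ?thesis
    by (cases "d > 0") (simp_all add: abs_if)
qed

lemma has_vector_derivative_partial:
  fixes U :: "real ^ 2 \<Rightarrow> 'b::real_normed_vector"
  assumes "U differentiable (at x)"
  shows "((\<lambda>t. U (x + t *\<^sub>R axis j 1)) has_vector_derivative partial j U x) (at 0)"
proof -
  have "(\<lambda>t. x + t *\<^sub>R axis j (1::real)) differentiable (at 0)"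
    by (intro derivative_intros differentiableI_vector) (auto intro!: derivative_eq_intros)
  then have "(U \<circ> (\<lambda>t. x + t *\<^sub>R axis j (1::real))) differentiable (at 0)"
    using assms by (intro differentiable_chain_at) simp_all
  then show ?thesis unfolding partial_def vector_derivative_works[symmetric] by (simp add: o_def)
qed

lemma smooth_imp_differentiable: "smooth U \<Longrightarrow> U differentiable (at x)"
  unfolding smooth_def by (metis Ck.simps(2))

lemma partial_const: "partial j (\<lambda>y. c) x = 0"
  unfolding partial_def by simp

lemma partial_adj:
  assumes "U differentiable (at x)"
  shows "partial j (\<lambda>y. adj (U y)) x = adj (partial j U x)"
proof -
  have "((\<lambda>t. adj (U (x + t *\<^sub>R axis j 1))) has_vector_derivative adj (partial j U x)) (at 0)"
    by (rule bounded_linear.has_vector_derivative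
        [OF bounded_linear_adj has_vector_derivative_partial[OF assms]])
  then show ?thesis unfolding partial_def by (rule vector_derivative_at)
qed

lemma partial_sandwich:
  assumes "U differentiable (at x)"
  shows "partial j (\<lambda>y. U y ** A ** adj (U y)) x
       = partial j U x ** A ** adj (U x) + U x ** A ** adj (partial j U x)"
proof -
  let ?g = "\<lambda>t. U (x + t *\<^sub>R axis j 1)"
  note g = has_vector_derivative_partial[OF assms, of j]
  note bb = bounded_bilinear.has_vector_derivative[OF bounded_bilinear_qmat_mult]
  have "((\<lambda>t. ?g t ** A ** adj (?g t)) has_vector_derivative
      ((?g 0 ** A) ** adj (partial j U x) + (?g 0 ** 0 + partial j U x ** A) ** adj (?g 0))) (at 0)"
    by (intro bb g has_vector_derivative_const
        bounded_linear.has_vector_derivative[OF bounded_linear_adj])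
  then show ?thesis
    unfolding partial_def by (intro vector_derivative_at) (simp add: add.commute)
qed

lemma adj_partial_mult_unitary:
  assumes U: "\<forall>y. unitary (U y)" and dU: "U differentiable (at x)"
  shows "adj (partial k U x) ** U x = - (adj (U x) ** partial k U x)"
proof -
  have "partial k (\<lambda>y. U y ** adj (U y)) x = 0"
    using U by (simp add: unitary_def partial_const)
  then have "partial k U x ** adj (U x) + U x ** adj (partial k U x) = 0"
    using partial_sandwich[OF dU, of k "mat 1"] by simp
  then have "adj (U x) ** (partial k U x ** adj (U x) + U x ** adj (partial k U x)) ** U x = 0"
    by simp
  then have "adj (U x) ** partial k U x + adj (partial k U x) ** U x = 0"
    by (simp add: qmat_linear_simps matrix_mul_assoc unitary_cancel[OF U[rule_format]])
  then show ?thesis by (simp add: eq_neg_iff_add_eq_0 add.commute)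
qed

lemma antihermitian_frame_gen:
  assumes "\<forall>y. unitary (U y)" "U differentiable (at x)"
  shows "adj (frame_gen U W x k) = - frame_gen U W x k"
  unfolding frame_gen_def
  by (simp add: adj_matrix_mult matrix_mul_assoc adj_partial_mult_unitary[OF assms] qmat_linear_simps)

lemma partial_unitary_orbit:
  assumes U: "unitary (U x)" and dU: "U differentiable (at x)" and W: "unitary W"
  shows "partial k (\<lambda>y. U y ** (W ** A ** adj W) ** adj (U y)) x
    = (U x ** W) ** (frame_gen U W x k ** A + A ** adj (frame_gen U W x k)) ** adj (U x ** W)"
  unfolding partial_sandwich[OF dU] frame_gen_def
  by (simp add: qmat_linear_simps matrix_mul_assoc unitary_cancel[OF U] unitary_cancel[OF W])

lemma unitary_basis_mat:
  assumes "cinner p p = 1" "cinner q q = 1" "cinner p q = 0"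
  shows "unitary (basis_mat p q)"
proof -
  have "cinner q p = cnj (cinner p q)" by (simp add: cinner_def sum_2 mult.commute)
  then have "cinner q p = 0" using assms(3) by simp
  then have "adj (basis_mat p q) ** basis_mat p q = mat 1"
    using assms unfolding vec_eq_iff forall_2
    by (simp add: adj_def basis_mat_def matrix_matrix_mult_def mat_def cinner_def sum_2)
  then show ?thesis unfolding unitary_def using matrix_left_right_inverse by blast
qed

lemma spectral_basis_mat:
  "l0 *\<^sub>R ketbra p p + l1 *\<^sub>R ketbra q q
     = basis_mat p q ** diag2 l0 l1 ** adj (basis_mat p q)"
  unfolding vec_eq_iff forall_2
  by (simp add: adj_def basis_mat_def matrix_matrix_mult_def diag2_def ketbra_def sum_2
      del: vector_scaleR_component)

lemma ketbra_matrix_vector_mult: "ketbra (V *v p) (V *v p) = V ** ketbra p p ** adj V"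
  unfolding vec_eq_iff forall_2
  by (simp add: adj_def matrix_matrix_mult_def matrix_vector_mult_def ketbra_def sum_2 algebra_simps)

lemma cinner_basis_mat: "cinner p (B *v p) = (adj (basis_mat p q) ** B ** basis_mat p q) $ 1 $ 1"
  by (simp add: adj_def basis_mat_def matrix_matrix_mult_def matrix_vector_mult_def cinner_def sum_2
      algebra_simps)

lemma im_cinner_eff_ham_mult:
  assumes U: "\<forall>y. unitary (U y)" and dU: "U differentiable (at x)"
    and W: "unitary (basis_mat p q)"
  shows "Im (cinner p ((eff_ham U x i ** eff_ham U x j) *v p))
    = Im (frame_gen U (basis_mat p q) x i $ 1 $ 2 * cnj (frame_gen U (basis_mat p q) x j $ 1 $ 2))"
proof -
  let ?W = "basis_mat p q" and ?A = "\<lambda>k. adj (U x) ** partial k U x"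
  have ham: "eff_ham U x k = (\<chi> a b. \<i> * (adj (partial k U x) ** U x) $ a $ b)" for k
    unfolding eff_ham_def Let_def partial_adj[OF dU] ..
  have i_times: "(\<chi> a b. \<i> * A $ a $ b) ** (\<chi> a b. \<i> * B $ a $ b) = - (A ** B)" for A B :: qmat
    unfolding vec_eq_iff forall_2 by (simp add: matrix_matrix_mult_def sum_2 algebra_simps)
  have "eff_ham U x i ** eff_ham U x j = - (?A i ** ?A j)"
    unfolding ham i_times adj_partial_mult_unitary[OF U dU] by (simp add: qmat_linear_simps)
  then have "cinner p ((eff_ham U x i ** eff_ham U x j) *v p)
      = - (adj ?W ** (?A i ** ?A j) ** ?W) $ 1 $ 1"
    by (simp add: cinner_basis_mat[of p _ q] qmat_linear_simps)
  also have "\<dots> = - ((adj ?W ** ?A i ** ?W) ** (adj ?W ** ?A j ** ?W)) $ 1 $ 1"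
    by (simp add: matrix_mul_assoc unitary_cancel[OF W])
  also have "\<dots> = - (frame_gen U ?W x i ** frame_gen U ?W x j) $ 1 $ 1"
    by (simp add: frame_gen_def adj_matrix_mult matrix_mul_assoc)
  finally show ?thesis
    by (simp only:) (intro im_neg_mult_antihermitian antihermitian_frame_gen[OF U dU])
qed

lemma uhlmann_unitary_orbit:
  fixes l0 l1 :: real
  assumes l: "l0 + l1 = 1" and U: "\<forall>y. unitary (U y)" and dU: "U differentiable (at x)"
    and W: "unitary W"
  shows "uhlmann (\<lambda>y. U y ** (W ** diag2 l0 l1 ** adj W) ** adj (U y)) x i j
    = 4 * (l0 - l1) ^ 3 * Im (frame_gen U W x i $ 1 $ 2 * cnj (frame_gen U W x j $ 1 $ 2))"
  by (rule uhlmann_unitary_sandwich_diag2[OF l unitary_matrix_mult[OF U[rule_format] W] _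
        partial_unitary_orbit[OF U[rule_format] dU W] antihermitian_frame_gen[OF U dU]])
    (simp add: adj_matrix_mult matrix_mul_assoc)

lemma purity_unitary_diag2:
  fixes l0 l1 :: real
  assumes W: "unitary W" and l: "l0 + l1 = 1"
  defines "R \<equiv> W ** diag2 l0 l1 ** adj W"
  shows "2 * Re (mtrace (R ** R)) - 1 = (l0 - l1)\<^sup>2"
proof -
  have "R ** R = W ** diag2 (l0 * l0) (l1 * l1) ** adj W"
    unfolding R_def by (simp add: matrix_mul_assoc unitary_cancel[OF W] flip: diag2_mult_diag2)
  then have "Re (mtrace (R ** R)) = l0 * l0 + l1 * l1"
    by (simp add: mtrace_unitary_sandwich[OF W] mtrace_diag2 del: of_real_add)
  then have "2 * Re (mtrace (R ** R)) - 1 = 2 * (l0 * l0 + l1 * l1) - (l0 + l1)\<^sup>2"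
    using l by simp
  also have "\<dots> = (l0 - l1)\<^sup>2"
    by (simp add: power2_eq_square algebra_simps)
  finally show ?thesis .
qed

theorem mainTheorem5:
  fixes \<rho> :: qmat and psi0 psi1 :: qvec and l0 l1 :: real
    and U :: "real ^ 2 \<Rightarrow> qmat"
  assumes state: "density_matrix \<rho>"
    and onb: "cinner psi0 psi0 = 1" "cinner psi1 psi1 = 1" "cinner psi0 psi1 = 0"
    and spec: "\<rho> = l0 *\<^sub>R ketbra psi0 psi0 + l1 *\<^sub>R ketbra psi1 psi1"
    and neq: "l0 \<noteq> l1"
    and unit: "\<forall>x. unitary (U x)"
    and sm: "smooth U"
  shows "let \<sigma> = (if l0 > l1 then 1 else -1 :: real);
             c = (2 * Re (mtrace (\<rho> ** \<rho>)) - 1) powr (3/2);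
             rhoF = (\<lambda>x. U x ** \<rho> ** adj (U x));
             PF = (\<lambda>x. ketbra (U x *v psi0) (U x *v psi0))
         in \<forall>x i j.
              uhlmann rhoF x i j = \<sigma> * c * uhlmann PF x i j \<and>
              uhlmann PF x i j = 4 * Im (cinner psi0 ((eff_ham U x i ** eff_ham U x j) *v psi0))"
proof -
  let ?W = "basis_mat psi0 psi1"
  have W: "unitary ?W" by (rule unitary_basis_mat[OF onb])
  have rho: "\<rho> = ?W ** diag2 l0 l1 ** adj ?W" unfolding spec by (rule spectral_basis_mat)
  have l: "l0 + l1 = 1"
    using state
    by (simp add: density_matrix_def rho mtrace_unitary_sandwich[OF W] mtrace_diag2 flip: of_real_add)
  have sign_purity:
    "(if l0 > l1 then 1 else -1) * (2 * Re (mtrace (\<rho> ** \<rho>)) - 1) powr (3/2) = (l0 - l1) ^ 3"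
    using sign_mult_powr_three_halves[of "l0 - l1"] by (simp add: rho purity_unitary_diag2[OF W l])
  have pure: "(\<lambda>x. ketbra (U x *v psi0) (U x *v psi0))
      = (\<lambda>x. U x ** (?W ** diag2 1 0 ** adj ?W) ** adj (U x))"
    using spectral_basis_mat[of 1 psi0 0 psi1] by (simp add: ketbra_matrix_vector_mult)
  have dU: "\<And>x. U differentiable (at x)" using sm by (rule smooth_imp_differentiable)
  show ?thesis
    unfolding Let_def sign_purity unfolding rho pure
    by (simp add: uhlmann_unitary_orbit[OF l unit dU W] uhlmann_unitary_orbit[of 1 0, OF _ unit dU W]
        im_cinner_eff_ham_mult[OF unit dU W])
qed

end
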